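(* Let $\{\epsilon(i)\}_{i\ge1}$ be a Rademacher sequence (independent, ${\bf P}(\epsilon(i)=1)={\bf P}(\epsilon(i)=-1)=1/2$), let $d\ge1$ be an integer, and set $$\xi_d(n)=\sum_{1\le i(1)<i(2)<\dots<i(d)\le n}\epsilon(i(1))\epsilon(i(2))\cdots\epsilon(i(d)).$$ Then $${\bf P}\Big(\limsup_{n\to\infty}\frac{\xi_d(n)}{\big(n\log\log(n+3)\big)^{d/2}}>0\Big)>0.$$ *)

theory Defs
  imports "HOL-Probability.Probability"
begin

definition xi :: "(nat \<Rightarrow> 'a \<Rightarrow> real) \<Rightarrow> nat \<Rightarrow> nat \<Rightarrow> 'a \<Rightarrow> real" where
  "xi eps d n \<omega> = (\<Sum>I\<in>{I. I \<subseteq> {1..n} \<and> card I = d}. \<Prod>i\<in>I. eps i \<omega>)"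

end

theory Submission
  imports Defs
begin

(* On a sign sequence x(1), x(2), ... the elementary symmetric sum
   e_d = xi_d(n) is a polynomial h_d(n, S_n) of the length n and the partial sum S_n, because
   S e_(d+1) = (d+2) e_(d+2) + (n-d) e_d; its leading term dominates, d! h_d(n,S) >= S^d/2
   as soon as S^2 >= A n.  So it suffices that, with positive probability, S_n exceeds a
   constant multiple of sqrt(n log log n) for infinitely many n.

   Take the checkpoints n_k = block_end k = 2*4^(k^2) and the blocks (n_(k-1), n_k].  A lower
   bound for binomial tails shows that the block sum is >= 2 level k (with level k of order
   sqrt(n_k log log n_k)) with probability >= 1/k.  The blocks are independent, so some
   block k in K..2K is large with probability >= 1/2.  A large block makes S_(n_k) >= level k
   or S_(n_(k-1)) <= -level k, and by the sign-flip symmetry S_(n_j) >= level j for some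
   j >= K-1 with probability >= 1/4.  Letting K grow, this happens for infinitely many j with
   probability >= 1/4, and there the normalized xi_d stays above a fixed delta > 0. *)

definition subsets_card :: "'a set \<Rightarrow> nat \<Rightarrow> 'a set set" where
  "subsets_card U j = {I. I \<subseteq> U \<and> card I = j}"

definition esym :: "(nat \<Rightarrow> real) \<Rightarrow> nat \<Rightarrow> nat \<Rightarrow> real" where
  "esym x d n = (\<Sum>I\<in>subsets_card {1..n} d. \<Prod>i\<in>I. x i)"

lemma finite_subsets_card: "finite U \<Longrightarrow> finite (subsets_card U j)"
  unfolding subsets_card_def by (rule finite_subset[of _ "Pow U"]) auto

lemma xi_eq_esym: "xi eps d n \<omega> = esym (\<lambda>i. eps i \<omega>) d n"
  unfolding xi_def esym_def subsets_card_def ..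

lemma esym_0: "esym x 0 n = 1"
proof -
  have "subsets_card {1..n} 0 = {{}}"
    unfolding subsets_card_def using finite_subset[of _ "{1..n}"] by (auto simp: card_eq_0_iff)
  then show ?thesis unfolding esym_def by simp
qed

lemma esym_1: "esym x 1 n = (\<Sum>i\<in>{1..n}. x i)"
proof -
  have "subsets_card {1..n} 1 = (\<lambda>i. {i}) ` {1..n}"
    unfolding subsets_card_def by (auto simp: card_Suc_eq)
  then have "esym x 1 n = (\<Sum>I\<in>(\<lambda>i. {i}) ` {1..n}. \<Prod>i\<in>I. x i)"
    unfolding esym_def by simp
  also have "\<dots> = (\<Sum>i\<in>{1..n}. x i)" by (subst sum.reindex) (auto simp: inj_on_def)
  finally show ?thesis .
qed

text \<open>Multiplying \<open>e\<^sub>d\<^sub>+\<^sub>1\<close> by a sign \<open>x i\<close> (\<open>x i\<^sup>2 = 1\<close>): a \<open>(d+1)\<close>-set avoiding \<open>i\<close> turns into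
  the \<open>(d+2)\<close>-set obtained by inserting \<open>i\<close>, one containing \<open>i\<close> into the \<open>d\<close>-set obtained
  by removing it.\<close>

lemma sum_subsets_insert:
  assumes "finite U" "i \<in> U"
  shows "(\<Sum>J\<in>{J\<in>subsets_card U j. i \<notin> J}. x i * (\<Prod>k\<in>J. x k))
       = (\<Sum>I\<in>{I\<in>subsets_card U (Suc j). i \<in> I}. \<Prod>k\<in>I. (x k :: real))"
proof (rule sum.reindex_bij_witness[where i = "\<lambda>I. I - {i}" and j = "\<lambda>J. insert i J"])
  fix I assume I: "I \<in> {I\<in>subsets_card U (Suc j). i \<in> I}"
  then have "finite I" using assms(1) finite_subset unfolding subsets_card_def by blast
  then show "insert i (I - {i}) = I" "I - {i} \<in> {J\<in>subsets_card U j. i \<notin> J}"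
    using I unfolding subsets_card_def by auto
next
  fix J assume J: "J \<in> {J\<in>subsets_card U j. i \<notin> J}"
  then have "finite J" using assms(1) finite_subset unfolding subsets_card_def by blast
  then show "insert i J - {i} = J" "insert i J \<in> {I\<in>subsets_card U (Suc j). i \<in> I}"
    "(\<Prod>k\<in>insert i J. x k) = x i * (\<Prod>k\<in>J. x k)" using J assms(2) unfolding subsets_card_def by auto
qed

lemma sum_subsets_remove:
  assumes "finite U" "i \<in> U" "x i * x i = (1::real)"
  shows "(\<Sum>J\<in>{J\<in>subsets_card U (Suc j). i \<in> J}. x i * (\<Prod>k\<in>J. x k))
       = (\<Sum>K\<in>{K\<in>subsets_card U j. i \<notin> K}. \<Prod>k\<in>K. x k)"
proof (rule sum.reindex_bij_witness[where j = "\<lambda>J. J - {i}" and i = "\<lambda>K. insert i K"])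
  fix J assume J: "J \<in> {J\<in>subsets_card U (Suc j). i \<in> J}"
  then have fin: "finite J" using assms(1) finite_subset unfolding subsets_card_def by blast
  then show "insert i (J - {i}) = J" "J - {i} \<in> {K\<in>subsets_card U j. i \<notin> K}"
    using J unfolding subsets_card_def by auto
  have "(\<Prod>k\<in>J. x k) = x i * (\<Prod>k\<in>J - {i}. x k)" using fin J by (simp add: prod.remove)
  then show "(\<Prod>k\<in>J - {i}. x k) = x i * (\<Prod>k\<in>J. x k)"
    using assms(3) by (simp add: mult.assoc[symmetric])
next
  fix K assume K: "K \<in> {K\<in>subsets_card U j. i \<notin> K}"
  then have "finite K" using assms(1) finite_subset unfolding subsets_card_def by blast
  then show "insert i K - {i} = K" "insert i K \<in> {J\<in>subsets_card U (Suc j). i \<in> J}"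
    using K assms(2) unfolding subsets_card_def by auto
qed

lemma sign_times_sum_subsets:
  assumes "finite U" "i \<in> U" "x i * x i = (1::real)"
  shows "x i * (\<Sum>J\<in>subsets_card U (Suc d). \<Prod>k\<in>J. x k)
       = (\<Sum>I\<in>{I\<in>subsets_card U (d+2). i \<in> I}. \<Prod>k\<in>I. x k)
         + (\<Sum>K\<in>{K\<in>subsets_card U d. i \<notin> K}. \<Prod>k\<in>K. x k)"
proof -
  have "x i * (\<Sum>J\<in>subsets_card U (Suc d). \<Prod>k\<in>J. x k)
      = (\<Sum>J\<in>{J\<in>subsets_card U (Suc d). i \<notin> J}. x i * (\<Prod>k\<in>J. x k))
        + (\<Sum>J\<in>{J\<in>subsets_card U (Suc d). i \<in> J}. x i * (\<Prod>k\<in>J. x k))"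
    using finite_subsets_card[OF assms(1)]
    by (simp add: sum_distrib_left sum.inter_filter sum.distrib[symmetric] if_distrib[symmetric])
      (intro sum.cong; auto)
  then show ?thesis
    unfolding sum_subsets_insert[OF assms(1,2)] sum_subsets_remove[where x = x, OF assms] by simp
qed

text \<open>Double counting: each \<open>j\<close>-subset of \<open>U\<close> contains \<open>j\<close> points of \<open>U\<close> and avoids
  \<open>card U - j\<close> of them.\<close>

lemma sum_over_members:
  assumes "finite U" "finite \<T>" "\<And>I. I \<in> \<T> \<Longrightarrow> I \<subseteq> U \<and> card I = j"
  shows "(\<Sum>i\<in>U. \<Sum>I\<in>{I\<in>\<T>. i \<in> I}. f I) = real j * (\<Sum>I\<in>\<T>. f I :: real)"
proof -
  have "(\<Sum>i\<in>U. \<Sum>I\<in>{I\<in>\<T>. i \<in> I}. f I) = (\<Sum>I\<in>\<T>. \<Sum>i\<in>{i\<in>U. i \<in> I}. f I)"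
    by (rule sum.swap_restrict[OF assms(1,2)])
  also have "\<dots> = (\<Sum>I\<in>\<T>. real j * f I)"
  proof (intro sum.cong refl)
    fix I assume "I \<in> \<T>"
    then have "{i\<in>U. i \<in> I} = I" "card I = j" using assms(3) by auto
    then show "(\<Sum>i\<in>{i\<in>U. i \<in> I}. f I) = real j * f I" by simp
  qed
  finally show ?thesis by (simp add: sum_distrib_left)
qed

lemma sum_over_nonmembers:
  assumes "finite U" "finite \<T>" "\<And>I. I \<in> \<T> \<Longrightarrow> I \<subseteq> U \<and> card I = j"
  shows "(\<Sum>i\<in>U. \<Sum>I\<in>{I\<in>\<T>. i \<notin> I}. f I) = (real (card U) - real j) * (\<Sum>I\<in>\<T>. f I :: real)"
proof -
  have "(\<Sum>i\<in>U. \<Sum>I\<in>{I\<in>\<T>. i \<notin> I}. f I) = (\<Sum>I\<in>\<T>. \<Sum>i\<in>{i\<in>U. i \<notin> I}. f I)"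
    by (rule sum.swap_restrict[OF assms(1,2)])
  also have "\<dots> = (\<Sum>I\<in>\<T>. (real (card U) - real j) * f I)"
  proof (intro sum.cong refl)
    fix I assume I: "I \<in> \<T>"
    have "I \<subseteq> U" "card I = j" using assms(3)[OF I] by auto
    moreover have "{i\<in>U. i \<notin> I} = U - I" by auto
    ultimately have "card {i\<in>U. i \<notin> I} = card U - j" "j \<le> card U"
      using assms(1) card_mono[of U I] card_Diff_subset[of I U] finite_subset[of I U] by auto
    then show "(\<Sum>i\<in>{i\<in>U. i \<notin> I}. f I) = (real (card U) - real j) * f I" by simp
  qed
  finally show ?thesis by (simp add: sum_distrib_left)
qed

lemma esym_Suc_Suc:
  assumes signs: "\<And>i. i \<in> {1..n} \<Longrightarrow> x i = 1 \<or> x i = -1"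
  shows "(\<Sum>i\<in>{1..n}. x i) * esym x (Suc d) n
       = real (d+2) * esym x (d+2) n + (real n - real d) * esym x d n"
proof -
  define U where "U = {1..n}"
  have U: "finite U" "card U = n" unfolding U_def by auto
  have members: "\<And>I. I \<in> subsets_card U j \<Longrightarrow> I \<subseteq> U \<and> card I = j" for j
    unfolding subsets_card_def by auto
  have sq: "x i * x i = 1" if "i \<in> U" for i using signs[of i] that unfolding U_def by auto
  have "(\<Sum>i\<in>U. x i) * esym x (Suc d) n = (\<Sum>i\<in>U. x i * (\<Sum>J\<in>subsets_card U (Suc d). \<Prod>k\<in>J. x k))"
    unfolding esym_def U_def by (simp add: sum_distrib_right)
  also have "\<dots> = (\<Sum>i\<in>U. (\<Sum>I\<in>{I\<in>subsets_card U (d+2). i \<in> I}. \<Prod>k\<in>I. x k)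
                           + (\<Sum>K\<in>{K\<in>subsets_card U d. i \<notin> K}. \<Prod>k\<in>K. x k))"
    by (intro sum.cong refl sign_times_sum_subsets[where x = x, OF U(1) _ sq])
  also have "\<dots> = (\<Sum>i\<in>U. \<Sum>I\<in>{I\<in>subsets_card U (d+2). i \<in> I}. \<Prod>k\<in>I. x k)
                 + (\<Sum>i\<in>U. \<Sum>K\<in>{K\<in>subsets_card U d. i \<notin> K}. \<Prod>k\<in>K. x k)"
    by (rule sum.distrib)
  also have "\<dots> = real (d+2) * esym x (d+2) n + (real n - real d) * esym x d n"
    unfolding esym_def U_def[symmetric]
    using sum_over_members[OF U(1) finite_subsets_card[OF U(1)] members]
      sum_over_nonmembers[OF U(1) finite_subsets_card[OF U(1)] members] U(2) by simp
  finally show ?thesis unfolding U_def .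
qed

text \<open>On sign sequences \<open>e\<^sub>d\<close> is therefore a polynomial \<open>h\<^sub>d(n, S)\<close> in the length \<open>n\<close> and the
  partial sum \<open>S\<close>, defined by the same three-term recurrence (a rescaled Hermite polynomial).\<close>

fun sign_poly :: "nat \<Rightarrow> real \<Rightarrow> real \<Rightarrow> real" where
  "sign_poly 0 n S = 1"
| "sign_poly (Suc 0) n S = S"
| "sign_poly (Suc (Suc d)) n S =
     (S * sign_poly (Suc d) n S - (n - real d) * sign_poly d n S) / real (d+2)"

lemma esym_eq_sign_poly:
  assumes signs: "\<And>i. i \<in> {1..n} \<Longrightarrow> x i = 1 \<or> x i = -1"
  shows "esym x d n = sign_poly d (real n) (\<Sum>i\<in>{1..n}. x i)"
proof (induction d rule: induct_nat_012)
  case (ge2 d)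
  have "(\<Sum>i\<in>{1..n}. x i) * esym x (Suc d) n
       = real (d+2) * esym x (d+2) n + (real n - real d) * esym x d n"
    by (rule esym_Suc_Suc[OF signs])
  with ge2 show ?case by (simp add: divide_simps algebra_simps)
qed (use esym_1[of x n] in \<open>simp_all add: esym_0\<close>)

lemma fact_sign_poly_Suc_Suc:
  "fact (Suc (Suc d)) * sign_poly (Suc (Suc d)) n S
   = S * (fact (Suc d) * sign_poly (Suc d) n S) - (n - real d) * (real d + 1) * (fact d * sign_poly d n S)"
proof -
  have fact2: "(fact (Suc (Suc d)) :: real) = real (d+2) * fact (Suc d)" by (simp only: fact_Suc) simp
  have "fact (Suc (Suc d)) * sign_poly (Suc (Suc d)) n S
        = fact (Suc d) * (S * sign_poly (Suc d) n S - (n - real d) * sign_poly d n S)"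
    by (simp only: fact2 sign_poly.simps) simp
  then show ?thesis by (simp add: algebra_simps)
qed

lemma sign_poly_error_step:
  fixes n S C0 C1 :: real
  assumes n1: "1 \<le> n" and nS: "n \<le> S^2" and S1: "1 \<le> S" and C0: "C0 \<ge> 0"
    and e0: "\<bar>fact d * sign_poly d n S - S^d\<bar> \<le> C0 * n * S^d / S^2"
    and e1: "\<bar>fact (Suc d) * sign_poly (Suc d) n S - S^Suc d\<bar> \<le> C1 * n * S^Suc d / S^2"
  shows "\<bar>fact (Suc (Suc d)) * sign_poly (Suc (Suc d)) n S - S^Suc (Suc d)\<bar>
         \<le> (C1 + (real d + 1)^2 * (1 + C0)) * n * S^Suc (Suc d) / S^2"
proof -
  define E0 where "E0 = fact d * sign_poly d n S - S^d"
  define E1 where "E1 = fact (Suc d) * sign_poly (Suc d) n S - S^Suc d"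
  have Spos: "S > 0" using S1 by simp
  have error: "fact (Suc (Suc d)) * sign_poly (Suc (Suc d)) n S - S^Suc (Suc d)
               = S * E1 - (n - real d) * (real d + 1) * (S^d + E0)"
    unfolding fact_sign_poly_Suc_Suc E0_def E1_def by (simp add: algebra_simps)
  have t1: "\<bar>S * E1\<bar> \<le> C1 * n * S^d"
  proof -
    have "\<bar>S * E1\<bar> = S * \<bar>E1\<bar>" using Spos by (simp add: abs_mult)
    also have "\<dots> \<le> S * (C1 * n * S^Suc d / S^2)"
      using e1 Spos unfolding E1_def by (intro mult_left_mono) auto
    also have "\<dots> = C1 * n * S^d" using Spos by (simp add: power2_eq_square field_simps)
    finally show ?thesis .
  qed
  have "C0 * n * S^d / S^2 \<le> C0 * S^2 * S^d / S^2"
    using C0 nS Spos by (intro divide_right_mono mult_right_mono mult_left_mono) auto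
  then have "\<bar>E0\<bar> \<le> C0 * S^d" using e0 Spos unfolding E0_def by simp
  moreover have "S^d > 0" using Spos by simp
  ultimately have b: "\<bar>S^d + E0\<bar> \<le> (1 + C0) * S^d" unfolding abs_le_iff by (simp add: algebra_simps)
  have "real d * 1 \<le> real d * n" using n1 by (intro mult_left_mono) auto
  then have a: "\<bar>n - real d\<bar> \<le> (real d + 1) * n" using n1 by (simp add: abs_le_iff algebra_simps)
  have t2: "\<bar>(n - real d) * (real d + 1) * (S^d + E0)\<bar> \<le> (real d + 1)^2 * (1 + C0) * n * S^d"
  proof -
    have "\<bar>(n - real d) * (real d + 1) * (S^d + E0)\<bar> = \<bar>n - real d\<bar> * (real d + 1) * \<bar>S^d + E0\<bar>"
      by (simp add: abs_mult)
    also have "\<dots> \<le> ((real d + 1) * n) * (real d + 1) * ((1 + C0) * S^d)"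
      using a b by (intro mult_mono) auto
    finally show ?thesis by (simp add: power2_eq_square algebra_simps)
  qed
  have "\<bar>S * E1 - (n - real d) * (real d + 1) * (S^d + E0)\<bar> \<le> (C1 + (real d + 1)^2 * (1 + C0)) * n * S^d"
    using abs_triangle_ineq4[of "S * E1"] t1 t2 by (simp add: algebra_simps)
  also have "\<dots> = (C1 + (real d + 1)^2 * (1 + C0)) * n * S^Suc (Suc d) / S^2"
    using Spos by (simp add: power2_eq_square)
  finally show ?thesis unfolding error .
qed

lemma sign_poly_error:
  "\<exists>C\<ge>0. \<forall>n S. 1 \<le> n \<longrightarrow> n \<le> S^2 \<longrightarrow> 1 \<le> S \<longrightarrow>
      \<bar>fact d * sign_poly d n S - S^d\<bar> \<le> C * n * S^d / S^2"
proof (induction d rule: induct_nat_012)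
  case (ge2 d)
  obtain C0 where "C0 \<ge> 0" and C0: "\<And>n S. 1 \<le> n \<Longrightarrow> n \<le> S^2 \<Longrightarrow> 1 \<le> S \<Longrightarrow>
      \<bar>fact d * sign_poly d n S - S^d\<bar> \<le> C0 * n * S^d / S^2" using ge2(1) by blast
  obtain C1 where "C1 \<ge> 0" and C1: "\<And>n S. 1 \<le> n \<Longrightarrow> n \<le> S^2 \<Longrightarrow> 1 \<le> S \<Longrightarrow>
      \<bar>fact (Suc d) * sign_poly (Suc d) n S - S^Suc d\<bar> \<le> C1 * n * S^Suc d / S^2" using ge2(2) by blast
  define C where "C = C1 + (real d + 1)^2 * (1 + C0)"
  have "\<forall>n S. 1 \<le> n \<longrightarrow> n \<le> S^2 \<longrightarrow> 1 \<le> S \<longrightarrow>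
      \<bar>fact (Suc (Suc d)) * sign_poly (Suc (Suc d)) n S - S^Suc (Suc d)\<bar> \<le> C * n * S^Suc (Suc d) / S^2"
    unfolding C_def using sign_poly_error_step[OF _ _ _ \<open>C0 \<ge> 0\<close> C0 C1] by blast
  moreover have "C \<ge> 0" unfolding C_def using \<open>C0 \<ge> 0\<close> \<open>C1 \<ge> 0\<close> by simp
  ultimately show ?case by blast
qed (rule exI[of _ 0]; simp)+

lemma sign_poly_lower:
  "\<exists>A\<ge>1. \<forall>n S. 1 \<le> n \<longrightarrow> A * n \<le> S^2 \<longrightarrow> 1 \<le> S \<longrightarrow> fact d * sign_poly d n S \<ge> S^d / 2"
proof -
  obtain C where "C \<ge> 0" and C: "\<And>n S. 1 \<le> n \<Longrightarrow> n \<le> S^2 \<Longrightarrow> 1 \<le> S \<Longrightarrow>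
      \<bar>fact d * sign_poly d n S - S^d\<bar> \<le> C * n * S^d / S^2" using sign_poly_error[of d] by blast
  show ?thesis
  proof (intro exI[of _ "1 + 2*C"] conjI allI impI)
    show "1 \<le> 1 + 2*C" using \<open>C \<ge> 0\<close> by simp
    fix n S :: real assume n1: "1 \<le> n" and AS: "(1 + 2*C) * n \<le> S^2" and S1: "1 \<le> S"
    have "n \<le> (1 + 2*C) * n" using \<open>C \<ge> 0\<close> n1 by (simp add: algebra_simps)
    then have nS: "n \<le> S^2" using AS by linarith
    have Spos: "S > 0" using S1 by simp
    have "C * n * S^d * 2 \<le> S^2 * S^d" using AS n1 Spos by (simp add: mult_right_mono algebra_simps)
    then have "C * n * S^d / S^2 \<le> S^d / 2" using Spos by (simp add: field_simps)
    then show "fact d * sign_poly d n S \<ge> S^d / 2" using C[OF n1 nS S1] unfolding abs_le_iff by linarith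
  qed
qed

text \<open>A lower bound for the central binomial coefficient, \<open>binom(2m, m) \<ge> 4\<^sup>m / (2 \<surd>m)\<close>,
  obtained from the squared inequality \<open>16\<^sup>m \<le> 4 m binom(2m, m)\<^sup>2\<close> by induction.\<close>

lemma central_binomial_sq_lower: "m \<ge> 1 \<Longrightarrow> 16^m \<le> 4 * m * ((2*m) choose m)^2"
proof (induction m rule: dec_induct)
  case base then show ?case by (simp add: numeral_2_eq_2)
next
  case (step m)
  define c where "c = (2*m) choose m"
  define c' where "c' = (2*Suc m) choose (Suc m)"
  have e1: "Suc m * ((2*m+1) choose m) = (2*m+1) * c"
    using binomial_absorb_comp[of "2*m+1" m] by (simp add: c_def)
  have e2: "Suc m * c' = Suc (2*m+1) * ((2*m+1) choose m)"
  proof -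
    have "2*Suc m = Suc (2*m+1)" by simp
    then show ?thesis unfolding c'_def by (simp only: Suc_times_binomial)
  qed
  have e3: "Suc m * c' = 2 * (2*m+1) * c"
  proof -
    have "Suc m * (Suc m * c') = Suc m * (Suc (2*m+1) * ((2*m+1) choose m))" using e2 by simp
    also have "\<dots> = 2 * (Suc m * ((2*m+1) choose m)) * Suc m" by (simp add: algebra_simps)
    also have "\<dots> = Suc m * (2 * (2*m+1) * c)" using e1 by (simp add: algebra_simps)
    finally show ?thesis by (simp only: mult_cancel1) simp
  qed
  have "Suc m * (4 * Suc m * c'^2) = 4 * (Suc m * c')^2" by (simp add: power2_eq_square algebra_simps)
  also have "\<dots> = 16 * (2*m+1)^2 * c^2" unfolding e3 by (simp add: power2_eq_square algebra_simps)
  also have "\<dots> \<ge> 16 * (Suc m * (4*m)) * c^2"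
    by (intro mult_right_mono mult_left_mono) (auto simp: power2_eq_square algebra_simps)
  finally have "Suc m * (16 * (4*m*c^2)) \<le> Suc m * (4 * Suc m * c'^2)" by (simp add: algebra_simps)
  then have "16 * (4*m*c^2) \<le> 4 * Suc m * c'^2" by (simp only: Suc_mult_le_cancel1)
  moreover have "16^Suc m \<le> 16 * (4*m*c^2)" using step.IH by (simp add: c_def)
  ultimately show ?case by (simp add: c'_def)
qed

lemma central_binomial_lower:
  assumes "m \<ge> 1" shows "4^m / (2 * sqrt m) \<le> real ((2*m) choose m)"
proof -
  define c where "c = real ((2*m) choose m)"
  have "(16::real)^m \<le> 4 * m * c^2"
    unfolding c_def using central_binomial_sq_lower[OF assms]
    by (metis of_nat_le_iff of_nat_mult of_nat_numeral of_nat_power)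
  have p4: "((4::real)^m)^2 = 16^m" by (simp add: power2_eq_square power_mult_distrib[symmetric])
  have "(4^m / (2 * sqrt m))^2 = ((4::real)^m)^2 / (4*m)"
    using assms by (simp add: power_divide power_mult_distrib)
  also have "\<dots> \<le> c^2" using \<open>16^m \<le> 4*m*c^2\<close> assms unfolding p4 by (simp add: divide_le_eq algebra_simps)
  finally have "4^m / (2 * sqrt m) \<le> c" by (rule power2_le_imp_le) (simp add: c_def)
  then show ?thesis by (simp add: c_def)
qed

lemma binomial_off_centre:
  assumes "m \<ge> 1" "j \<le> m"
  shows "real ((2*m) choose m) * ((real m - j) / (real m + j))^j \<le> real ((2*m) choose (m+j))"
  using assms(2)
proof (induction j)
  case 0 then show ?case by simp
next
  case (Suc j)
  have rec: "real (Suc (m+j)) * real ((2*m) choose (m + Suc j)) = (real m - j) * real ((2*m) choose (m+j))"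
  proof -
    have "Suc (m+j) * ((2*m) choose Suc (m+j)) = 2*m * ((2*m - 1) choose (m+j))" by (rule binomial_absorption)
    also have "\<dots> = (2*m - (m+j)) * ((2*m) choose (m+j))" by (rule binomial_absorb_comp[symmetric])
    finally have "Suc (m+j) * ((2*m) choose (m + Suc j)) = (m - j) * ((2*m) choose (m+j))" by simp
    then have "real (Suc (m+j) * ((2*m) choose (m + Suc j))) = real ((m - j) * ((2*m) choose (m+j)))" by metis
    then show ?thesis using Suc.prems by (simp add: of_nat_diff) (simp add: algebra_simps)
  qed
  have pos: "real m + j > 0" using assms by simp
  define a where "a = (real m - j) / (real m + j)"
  define b where "b = (real m - Suc j) / (real m + Suc j)"
  have b0: "b \<ge> 0" unfolding b_def using Suc.prems by simp
  have ba: "b \<le> a" unfolding a_def b_def using Suc.prems pos by (simp add: divide_simps) (simp add: algebra_simps)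
  have "real ((2*m) choose m) * b^Suc j = real ((2*m) choose m) * b^j * b" by simp
  also have "\<dots> \<le> real ((2*m) choose m) * a^j * b"
    using b0 ba by (intro mult_right_mono mult_left_mono power_mono) auto
  also have "\<dots> \<le> real ((2*m) choose (m+j)) * b"
    using Suc.IH Suc.prems b0 a_def by (intro mult_right_mono) auto
  also have "\<dots> \<le> real ((2*m) choose (m+j)) * ((real m - j) / (real m + Suc j))"
    unfolding b_def using Suc.prems by (intro mult_left_mono divide_right_mono) auto
  also have "\<dots> = real ((2*m) choose (m + Suc j))" using rec by (simp add: field_simps)
  finally show ?case by (simp add: b_def)
qed

lemma exp_neg_le_one_minus: fixes z :: real assumes "0 \<le> z" "z \<le> 1/2" shows "exp (-2*z) \<le> 1 - z"
proof -
  have "1 + 2*z \<le> exp (2*z)" using exp_ge_add_one_self[of "2*z"] by simp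
  then have "exp (-2*z) \<le> 1 / (1 + 2*z)" using assms by (simp add: exp_minus field_simps)
  also have "\<dots> \<le> 1 - z"
  proof -
    have "z * (2*z) \<le> z * 1" using assms by (intro mult_left_mono) auto
    then show ?thesis using assms by (simp add: divide_simps) (simp add: algebra_simps power2_eq_square)
  qed
  finally show ?thesis .
qed

lemma binomial_off_centre_exp:
  assumes m1: "m \<ge> 1" and r8: "8 * r \<le> m" and j: "j \<in> {r..2*r}"
  shows "real ((2*m) choose m) * exp (-16 * real r^2 / real m) \<le> real ((2*m) choose (m+j))"
proof -
  have mpos: "real m > 0" using m1 by simp
  define z where "z = 2 * real r / real m"
  have z0: "0 \<le> z" "2*z \<le> 1/2" using r8 mpos unfolding z_def by (auto simp: field_simps)
  define q where "q = (real m - 2*r) / (real m + 2*r)"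
  have q: "0 \<le> q" "q \<le> 1" using r8 mpos unfolding q_def by (auto simp: divide_simps)
  have "exp (-4*z) \<le> 1 - 2*z" using exp_neg_le_one_minus[of "2*z"] z0 by simp
  also have "\<dots> \<le> (1 - z) / (1 + z)" using z0 by (simp add: divide_simps) (simp add: algebra_simps power2_eq_square)
  also have "\<dots> = q" unfolding z_def q_def using mpos by (simp add: divide_simps)
  finally have base: "exp (-4*z) \<le> q" .
  have "exp (-16 * real r^2 / real m) = exp (-4*z) ^ (2*r)"
    unfolding z_def using mpos by (simp add: exp_of_nat_mult[symmetric] power2_eq_square field_simps)
  also have "\<dots> \<le> q ^ (2*r)" using base by (intro power_mono) auto
  also have "\<dots> \<le> q ^ j" using j q by (intro power_decreasing) auto
  also have "\<dots> \<le> ((real m - j) / (real m + j)) ^ j"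
    unfolding q_def using j r8 mpos by (intro power_mono) (auto simp: divide_simps algebra_simps)
  finally have "real ((2*m) choose m) * exp (-16 * real r^2 / real m)
      \<le> real ((2*m) choose m) * ((real m - j) / (real m + j)) ^ j"
    by (intro mult_left_mono) auto
  also have "\<dots> \<le> real ((2*m) choose (m+j))" using j r8 by (intro binomial_off_centre[OF m1]) auto
  finally show ?thesis .
qed

text \<open>Tail estimate: if \<open>m \<le> r\<^sup>2\<close> and \<open>8r \<le> m\<close>, the \<open>r+1 \<ge> \<surd>m\<close> coefficients
  \<open>binom(2m, m+j)\<close>, \<open>r \<le> j \<le> 2r\<close>, add up to at least \<open>4\<^sup>m exp(-16 r\<^sup>2/m) / 2\<close>.\<close>

lemma binomial_tail_lower:
  assumes m1: "m \<ge> 1" and r2: "real m \<le> real r ^ 2" and r8: "8 * r \<le> m"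
  shows "4^m * exp (-16 * real r^2 / real m) / 2 \<le> real (\<Sum>j\<in>{r..2*r}. (2*m) choose (m+j))"
proof -
  define x where "x = exp (-16 * real r^2 / real m)"
  have x0: "x \<ge> 0" unfolding x_def by simp
  have "sqrt m \<le> real r + 1" using real_sqrt_le_mono[OF r2] by simp
  then have r_sqrt: "4^m / (2 * (real r + 1)) \<le> 4^m / (2 * sqrt m)"
    using m1 by (intro divide_left_mono) auto
  have "4^m * x / 2 = (real r + 1) * (4^m / (2 * (real r + 1))) * x" by (simp add: field_simps)
  also have "\<dots> \<le> (real r + 1) * (4^m / (2 * sqrt m)) * x"
    using r_sqrt x0 by (intro mult_right_mono mult_left_mono) auto
  also have "\<dots> \<le> (real r + 1) * real ((2*m) choose m) * x"
    using central_binomial_lower[OF m1] x0 by (intro mult_right_mono mult_left_mono) auto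
  also have "\<dots> = (\<Sum>j\<in>{r..2*r}. real ((2*m) choose m) * x)" by simp
  also have "\<dots> \<le> (\<Sum>j\<in>{r..2*r}. real ((2*m) choose (m+j)))"
    unfolding x_def by (intro sum_mono binomial_off_centre_exp[OF m1 r8])
  finally show ?thesis unfolding x_def by (simp add: of_nat_sum)
qed

text \<open>The scales of the construction: checkpoints \<open>n\<^sub>k = block_end k = 2\<cdot>4\<^sup>k\<^sup>\<^sup>2\<close>; the block
  between \<open>n\<^sub>k\<^sub>-\<^sub>1\<close> and \<open>n\<^sub>k\<close> has \<open>2 half_len k\<close> elements; and the threshold
  \<open>level k = 2\<^sup>k\<^sup>\<^sup>2 \<lfloor>\<surd>(ln k) / 8\<rfloor>\<close>, of order \<open>\<surd>(n\<^sub>k log log n\<^sub>k)\<close>.\<close>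

definition block_end :: "nat \<Rightarrow> nat" where "block_end k = 2 * 4^(k^2)"
definition half_len :: "nat \<Rightarrow> nat" where "half_len k = 4^(k^2) - 4^((k-1)^2)"
definition lil_factor :: "nat \<Rightarrow> nat" where "lil_factor k = nat \<lfloor>sqrt (ln (real k)) / 8\<rfloor>"
definition level :: "nat \<Rightarrow> nat" where "level k = 2^(k^2) * lil_factor k"

lemma four_pow_step: "k \<ge> 1 \<Longrightarrow> 4 * 4^((k-1)^2) \<le> (4::nat)^(k^2)"
proof -
  assume k: "k \<ge> 1"
  have "Suc ((k-1)^2) \<le> k^2" using k by (cases k) (auto simp: power2_eq_square)
  then have "(4::nat)^(Suc ((k-1)^2)) \<le> 4^(k^2)" by (intro power_increasing) auto
  then show ?thesis by simp
qed

lemma block_end_step: "k \<ge> 1 \<Longrightarrow> block_end (k-1) + 2 * half_len k = block_end k"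
  using four_pow_step[of k] unfolding block_end_def half_len_def by simp

lemma block_end_mono: "k \<le> k' \<Longrightarrow> block_end k \<le> block_end k'"
  unfolding block_end_def by (intro mult_left_mono power_increasing) (auto simp: power_mono)

lemma block_end_ge: "k \<le> block_end k"
proof -
  have "k < 2^k" by (rule less_exp)
  also have "(2::nat)^k \<le> 4^k" by (intro power_mono) auto
  also have "(4::nat)^k \<le> 4^(k^2)" by (intro power_increasing) (auto simp: power2_eq_square)
  finally show ?thesis unfolding block_end_def by simp
qed

lemma half_len_bounds: "k \<ge> 1 \<Longrightarrow> 3 * 4^(k^2) \<le> 4 * half_len k \<and> half_len k \<le> 4^(k^2)"
  using four_pow_step[of k] unfolding half_len_def by simp

lemma level_sq: "real (level k)^2 = 4^(k^2) * real (lil_factor k)^2"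
proof -
  have "(2::real)^(k^2) * 2^(k^2) = 4^(k^2)" by (simp add: power_mult_distrib[symmetric])
  then show ?thesis unfolding level_def by (simp add: power2_eq_square algebra_simps)
qed

lemma lil_factor_mono: "k \<le> k' \<Longrightarrow> lil_factor k \<le> lil_factor k'"
proof -
  assume "k \<le> k'"
  then have "ln (real k) \<le> ln (real k')" using ln_ge_zero[of "real k'"] by (cases "k = 0"; cases "k' = 0") auto
  then show ?thesis unfolding lil_factor_def by (intro nat_mono floor_mono) simp
qed

lemma level_mono: "k \<le> k' \<Longrightarrow> level k \<le> level k'"
  unfolding level_def by (intro mult_mono lil_factor_mono power_increasing) auto

lemma lil_factor_upper: "k \<ge> 1 \<Longrightarrow> real (lil_factor k)^2 \<le> ln (real k) / 64"
proof -
  assume k: "k \<ge> 1"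
  define x where "x = sqrt (ln (real k)) / 8"
  have x0: "x \<ge> 0" unfolding x_def using k by simp
  have "real (lil_factor k) \<le> x" unfolding lil_factor_def x_def[symmetric] using x0 by linarith
  then have "real (lil_factor k)^2 \<le> x^2" by (intro power_mono) auto
  also have "x^2 = ln (real k) / 64" unfolding x_def using k by (simp add: power_divide)
  finally show ?thesis .
qed

lemma lil_factor_lower: "ln (real k) \<ge> 256 \<Longrightarrow> real (lil_factor k)^2 \<ge> ln (real k) / 256"
proof -
  assume k: "ln (real k) \<ge> 256"
  define x where "x = sqrt (ln (real k)) / 8"
  have "sqrt (ln (real k)) \<ge> sqrt 256" using k by (intro real_sqrt_le_mono) auto
  then have x2: "x \<ge> 2" unfolding x_def by simp
  have "real (lil_factor k) \<ge> x - 1" unfolding lil_factor_def x_def[symmetric] using x2 by linarith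
  then have "real (lil_factor k) \<ge> x / 2" using x2 by linarith
  then have "(x / 2)^2 \<le> real (lil_factor k)^2" using x2 by (intro power_mono) auto
  then show ?thesis unfolding x_def using k by (simp add: power_divide)
qed

lemma eventually_ln_ge: "eventually (\<lambda>k. X \<le> ln (real k)) sequentially"
  using filterlim_compose[OF ln_at_top filterlim_real_sequentially]
  unfolding filterlim_at_top by blast

lemma eventually_lil_factor_ge: "eventually (\<lambda>k. T \<le> real (lil_factor k)^2) sequentially"
  using eventually_ln_ge[of 256] eventually_ln_ge[of "256 * T"]
  by eventually_elim (use lil_factor_lower in fastforce)

lemma two_pow_sq_ge: "k \<ge> 4 \<Longrightarrow> 32 * k \<le> 2^(k^2)"
proof -
  assume k: "k \<ge> 4"
  have "32 * k \<le> 32 * 2^k" using less_exp[of k] by simp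
  also have "(32::nat) * 2^k = 2^(k+5)" by (simp add: power_add)
  also have "(2::nat)^(k+5) \<le> 2^(k^2)"
  proof (intro power_increasing)
    have "k * 4 \<le> k * k" using k by (intro mult_left_mono) auto
    then show "k + 5 \<le> k^2" unfolding power2_eq_square using k by linarith
  qed auto
  finally show ?thesis .
qed

text \<open>The conditions under which block \<open>k\<close>, of length \<open>2 half_len k\<close>, has sum \<open>\<ge> 2 level k\<close>
  with probability at least \<open>1/k\<close> (see \<open>binomial_tail_lower\<close>).\<close>

lemma half_len_le_level_sq:
  assumes "k \<ge> 1" "lil_factor k \<ge> 1" shows "real (half_len k) \<le> real (level k)^2"
proof -
  have "real (half_len k) \<le> 4^(k^2)"
    using half_len_bounds[OF assms(1)] by (metis of_nat_le_iff of_nat_numeral of_nat_power)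
  also have "\<dots> \<le> 4^(k^2) * real (lil_factor k)^2" using assms(2) by (simp add: one_le_power)
  finally show ?thesis by (simp add: level_sq)
qed

lemma eight_level_le_half_len:
  assumes k: "k \<ge> 4" shows "8 * level k \<le> half_len k"
proof -
  have "real (lil_factor k) \<le> real (lil_factor k)^2" by (cases "lil_factor k") (auto simp: power2_eq_square)
  also have "\<dots> \<le> ln (real k) / 64" using lil_factor_upper k by simp
  also have "\<dots> \<le> real k" using ln_le_minus_one[of "real k"] k by simp
  finally have "lil_factor k \<le> k" by simp
  then have "32 * lil_factor k * 2^(k^2) \<le> 2^(k^2) * (2::nat)^(k^2)" using two_pow_sq_ge[OF k] by simp
  also have "\<dots> = 4^(k^2)" by (simp add: power_mult_distrib[symmetric])
  finally have "32 * level k \<le> 4^(k^2)" unfolding level_def by (simp add: algebra_simps)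
  then show ?thesis using half_len_bounds[of k] k by linarith
qed

lemma inverse_le_block_exp:
  assumes k: "k \<ge> 4" and l: "ln (real k) \<ge> 3/2"
  shows "1 / real k \<le> exp (-16 * real (level k)^2 / real (half_len k)) / 2"
proof -
  have kpos: "real k > 0" using k by simp
  have "3 * 4^(k^2) \<le> 4 * half_len k" using half_len_bounds[of k] k by simp
  then have "real (3 * 4^(k^2)) \<le> real (4 * half_len k)" by (simp only: of_nat_le_iff)
  then have "3 * 4^(k^2) \<le> 4 * real (half_len k)" by simp
  moreover have "(0::real) < 4^(k^2)" by simp
  ultimately have hpos: "real (half_len k) > 0" by linarith
  have "16 * real (level k)^2 \<le> 16 * (4^(k^2) * (ln (real k) / 64))"
    unfolding level_sq using lil_factor_upper k by (intro mult_left_mono) auto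
  also have "\<dots> = (3 * 4^(k^2)) * (ln (real k) / 12)" by simp
  also have "\<dots> \<le> (4 * real (half_len k)) * (ln (real k) / 12)"
    using \<open>3 * 4^(k^2) \<le> 4 * real (half_len k)\<close> l by (intro mult_right_mono) auto
  finally have "16 * real (level k)^2 / real (half_len k) \<le> ln (real k) / 3"
    using hpos by (simp add: divide_simps mult.commute)
  then have "exp (- (ln (real k) / 3)) \<le> exp (-16 * real (level k)^2 / real (half_len k))" by simp
  moreover have "1 / real k \<le> exp (- (ln (real k) / 3)) / 2"
  proof -
    have "2 \<le> 1 + 2 * ln (real k) / 3" using l by simp
    also have "\<dots> \<le> exp (2 * ln (real k) / 3)" by (rule exp_ge_add_one_self)
    also have "exp (2 * ln (real k) / 3) = exp (ln (real k)) * exp (- (ln (real k) / 3))"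
      by (simp add: exp_add[symmetric])
    also have "\<dots> = real k * exp (- (ln (real k) / 3))" using kpos by simp
    finally show ?thesis using kpos by (simp add: divide_simps mult.commute)
  qed
  ultimately show ?thesis by linarith
qed

lemma eventually_block_conditions:
  "eventually (\<lambda>k. k \<ge> 1 \<and> half_len k \<ge> 1 \<and> real (half_len k) \<le> real (level k)^2
     \<and> 8 * level k \<le> half_len k
     \<and> 1 / real k \<le> exp (-16 * real (level k)^2 / real (half_len k)) / 2) sequentially"
  using eventually_ge_at_top[of 4] eventually_lil_factor_ge[of 1] eventually_ln_ge[of "3/2"]
proof eventually_elim
  case (elim k)
  have "lil_factor k \<ge> 1" using elim(2) by (cases "lil_factor k") auto
  moreover have "(1::nat) \<le> 4^(k^2)" by simp
  then have "half_len k \<ge> 1" using half_len_bounds[of k] elim(1) by linarith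
  ultimately show ?case
    using elim half_len_le_level_sq[of k] eight_level_le_half_len[of k] inverse_le_block_exp[of k]
    by auto
qed

lemma ln_ln_block_end: "k \<ge> 4 \<Longrightarrow> ln (ln (real (block_end k) + 3)) \<le> 3 * ln (real k)"
proof -
  assume k: "k \<ge> 4"
  have "(4::real) \<le> 4^(k^2)" using k by (intro power_increasing[of 1, simplified]) (auto simp: power2_eq_square)
  then have "real (block_end k) + 3 \<le> 4^(k^2+1)" unfolding block_end_def by simp
  then have "ln (real (block_end k) + 3) \<le> ln (4^(k^2+1))" by simp
  also have "\<dots> = real (k^2+1) * ln 4" by (simp only: ln_realpow)
  also have "\<dots> \<le> real (k^2+1) * 3" using ln_le_minus_one[of 4] by (intro mult_left_mono) auto
  also have "\<dots> \<le> real k ^ 3"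
  proof -
    have cube: "real k^3 = real k * real k^2" by (simp add: power3_eq_cube power2_eq_square)
    have "4 * real k^2 \<le> real k * real k^2" using k by (intro mult_right_mono) auto
    moreover have "real k^2 \<ge> 4^2" using k by (intro power_mono) auto
    ultimately have "3 * (real k^2 + 1) \<le> real k^3" unfolding cube by simp
    then show ?thesis by (simp add: algebra_simps)
  qed
  finally have "ln (real (block_end k) + 3) \<le> real k ^ 3" .
  moreover have "ln (real (block_end k) + 3) > 0" by simp
  ultimately have "ln (ln (real (block_end k) + 3)) \<le> ln (real k ^ 3)" using k by (subst ln_le_cancel_iff) auto
  also have "\<dots> = 3 * ln (real k)" by (simp add: ln_realpow)
  finally show ?thesis .
qed

lemma eventually_level_large:
  "eventually (\<lambda>k. 1 \<le> level k \<and> A * real (block_end k) \<le> real (level k)^2 \<and>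
     real (block_end k) * ln (ln (real (block_end k) + 3)) \<le> 1536 * real (level k)^2) sequentially"
  using eventually_ge_at_top[of 4] eventually_lil_factor_ge[of "max 1 (2*A)"] eventually_ln_ge[of 256]
proof eventually_elim
  case (elim k)
  have q0: "(4::real)^(k^2) \<ge> 0" by simp
  have n: "real (block_end k) = 2 * 4^(k^2)" unfolding block_end_def by simp
  have "lil_factor k \<ge> 1" using elim(2) by (cases "lil_factor k") auto
  then have "1 \<le> level k" unfolding level_def by (simp add: Suc_le_eq)
  moreover have "A * real (block_end k) \<le> real (level k)^2"
  proof -
    have "A * real (block_end k) = 4^(k^2) * (2 * A)" unfolding n by simp
    also have "\<dots> \<le> 4^(k^2) * real (lil_factor k)^2" using elim(2) q0 by (intro mult_left_mono) auto
    finally show ?thesis unfolding level_sq .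
  qed
  moreover have "real (block_end k) * ln (ln (real (block_end k) + 3)) \<le> 1536 * real (level k)^2"
  proof -
    have "ln (ln (real (block_end k) + 3)) \<le> 768 * real (lil_factor k)^2"
      using ln_ln_block_end[OF elim(1)] lil_factor_lower[OF elim(3)] by simp
    then have "real (block_end k) * ln (ln (real (block_end k) + 3))
        \<le> (2 * 4^(k^2)) * (768 * real (lil_factor k)^2)"
      unfolding n using q0 by (intro mult_left_mono) auto
    then show ?thesis unfolding level_sq by simp
  qed
  ultimately show ?case by simp
qed

definition partial_sum :: "(nat \<Rightarrow> real) \<Rightarrow> nat \<Rightarrow> real" where
  "partial_sum x n = (\<Sum>i\<in>{1..n}. x i)"

lemma partial_sum_restrict: "{1..n} \<subseteq> G \<Longrightarrow> partial_sum (restrict x G) n = partial_sum x n"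
  unfolding partial_sum_def by (intro sum.cong) auto

text \<open>A sign vector on a set \<open>F\<close> of size \<open>2m\<close> with exactly \<open>m + j\<close> plus signs has sum \<open>2j\<close>;
  counting subsets gives a lower bound for the number of sign vectors with sum \<open>\<ge> 2r\<close>.\<close>

lemma sum_sign_vector:
  assumes "finite F" "P \<subseteq> F"
  shows "(\<Sum>i\<in>F. if i \<in> P then (1::real) else -1) = 2 * real (card P) - real (card F)"
proof -
  have "(\<Sum>i\<in>F. if i \<in> P then (1::real) else -1) = real (card (F \<inter> P)) - real (card (F - P))"
    using sum.If_cases[OF assms(1), of "\<lambda>i. i \<in> P" "\<lambda>_. 1::real" "\<lambda>_. -1"]
    by (simp add: Diff_eq Int_def)
  also have "\<dots> = 2 * real (card P) - real (card F)"
    using assms by (simp add: Int_absorb1 card_Diff_subset finite_subset of_nat_diff card_mono)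
  finally show ?thesis .
qed

lemma card_sign_vectors_large_sum:
  fixes F :: "nat set"
  assumes fin: "finite F" and cF: "card F = 2*m"
  shows "(\<Sum>j\<in>{r..2*r}. (2*m) choose (m+j))
         \<le> card {s \<in> PiE F (\<lambda>_. {-1,1::real}). (\<Sum>i\<in>F. s i) \<ge> 2 * real r}"
proof -
  define g where "g P = (\<lambda>i\<in>F. if i \<in> P then (1::real) else -1)" for P
  define U where "U = (\<Union>j\<in>{r..2*r}. {P. P \<subseteq> F \<and> card P = m+j})"
  have "card U = (\<Sum>j\<in>{r..2*r}. card {P. P \<subseteq> F \<and> card P = m+j})"
    unfolding U_def
    by (rule card_UN_disjoint) (auto intro: finite_subset[OF _ finite_Pow_iff[THEN iffD2, OF fin]])
  also have "\<dots> = (\<Sum>j\<in>{r..2*r}. (2*m) choose (m+j))" using n_subsets[OF fin] cF by simp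
  finally have cardU: "card U = (\<Sum>j\<in>{r..2*r}. (2*m) choose (m+j))" .
  have "inj_on g U"
  proof (rule inj_onI)
    fix P P' assume "P \<in> U" "P' \<in> U" "g P = g P'"
    then show "P = P'" unfolding U_def g_def by (auto simp: fun_eq_iff split: if_splits)
  qed
  moreover have "g ` U \<subseteq> {s \<in> PiE F (\<lambda>_. {-1,1::real}). (\<Sum>i\<in>F. s i) \<ge> 2 * real r}"
  proof
    fix s assume "s \<in> g ` U"
    then obtain P j where P: "P \<subseteq> F" "card P = m + j" "j \<in> {r..2*r}" "s = g P" unfolding U_def by auto
    have "(\<Sum>i\<in>F. s i) = (\<Sum>i\<in>F. if i \<in> P then (1::real) else -1)" unfolding P(4) g_def by simp
    then have "(\<Sum>i\<in>F. s i) \<ge> 2 * real r" using sum_sign_vector[OF fin P(1)] P cF by simp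
    moreover have "s \<in> PiE F (\<lambda>_. {-1,1::real})" unfolding P(4) g_def by auto
    ultimately show "s \<in> {s \<in> PiE F (\<lambda>_. {-1,1::real}). (\<Sum>i\<in>F. s i) \<ge> 2 * real r}" by simp
  qed
  moreover have "finite (PiE F (\<lambda>_. {-1,1::real}))" using fin by (simp add: finite_PiE)
  ultimately have "card U \<le> card {s \<in> PiE F (\<lambda>_. {-1,1::real}). (\<Sum>i\<in>F. s i) \<ge> 2 * real r}"
    by (metis (no_types, lifting) card_image card_mono finite_subset mem_Collect_eq subsetI)
  then show ?thesis using cardU by simp
qed

definition block :: "nat \<Rightarrow> nat set" where "block k = {block_end (k-1)<..block_end k}"

lemma card_block: "k \<ge> 1 \<Longrightarrow> card (block k) = 2 * half_len k"
  unfolding block_def using block_end_step[of k] by simp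

lemma block_subset: "block k \<subseteq> {1..}" unfolding block_def by auto

lemma disjoint_blocks: "disjoint_family_on block {1..}"
proof (unfold disjoint_family_on_def, intro ballI impI)
  fix k k' :: nat assume "k \<in> {1..}" "k' \<in> {1..}" "k \<noteq> k'"
  then have "block_end k \<le> block_end (k'-1) \<or> block_end k' \<le> block_end (k-1)"
    by (cases "k < k'") (auto intro: block_end_mono)
  then show "block k \<inter> block k' = {}" unfolding block_def by auto
qed

lemma partial_sum_block:
  "k \<ge> 1 \<Longrightarrow> partial_sum x (block_end k) = partial_sum x (block_end (k-1)) + (\<Sum>i\<in>block k. x i)"
proof -
  assume "k \<ge> 1"
  then have "block_end (k-1) \<le> block_end k" by (intro block_end_mono) auto
  then have "{1..block_end k} = {1..block_end (k-1)} \<union> block k" unfolding block_def by auto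
  moreover have "{1..block_end (k-1)} \<inter> block k = {}" unfolding block_def by auto
  ultimately show ?thesis unfolding partial_sum_def by (simp add: sum.union_disjoint block_def)
qed

lemma prod_one_minus_inverse:
  "K \<ge> 1 \<Longrightarrow> (\<Prod>k\<in>{K..K+n}. 1 - 1 / real k) = (real K - 1) / real (K + n)"
proof (induction n)
  case (Suc n)
  have "{K..K + Suc n} = insert (K + Suc n) {K..K+n}" by auto
  then have "(\<Prod>k\<in>{K..K+Suc n}. 1 - 1 / real k)
      = (1 - 1 / real (K + Suc n)) * ((real K - 1) / real (K + n))" using Suc by simp
  also have "1 - 1 / real (K + Suc n) = real (K + n) / real (K + Suc n)" by (simp add: field_simps)
  also have "real (K + n) / real (K + Suc n) * ((real K - 1) / real (K + n)) = (real K - 1) / real (K + Suc n)"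
    using Suc.prems by simp
  finally show ?case .
qed (simp add: field_simps)

definition window :: "nat \<Rightarrow> nat set" where "window K = {1..block_end (2*K)}"

lemma window: "finite (window K)" "window K \<noteq> {}" "window K \<subseteq> {1..}"
  unfolding window_def block_end_def by auto

lemma partial_sum_window:
  "k \<le> 2*K \<Longrightarrow> partial_sum (restrict f (window K)) (block_end k) = partial_sum f (block_end k)"
  using block_end_mono[of k "2*K"] unfolding window_def by (intro partial_sum_restrict) auto

definition high_at :: "nat set \<Rightarrow> (nat \<Rightarrow> real) \<Rightarrow> bool" where
  "high_at L s \<longleftrightarrow> (\<exists>k\<in>L. real (level k) \<le> partial_sum s (block_end k))"

definition low_before :: "nat set \<Rightarrow> (nat \<Rightarrow> real) \<Rightarrow> bool" where
  "low_before L s \<longleftrightarrow> (\<exists>k\<in>L. partial_sum s (block_end (k-1)) \<le> - real (level k))"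

locale rademacher = prob_space M for M :: "'a measure" +
  fixes eps :: "nat \<Rightarrow> 'a \<Rightarrow> real"
  assumes indep: "indep_vars (\<lambda>_. borel) eps {1..}"
    and prob_plus: "\<And>i. i \<ge> 1 \<Longrightarrow> prob {\<omega> \<in> space M. eps i \<omega> = 1} = 1/2"
    and prob_minus: "\<And>i. i \<ge> 1 \<Longrightarrow> prob {\<omega> \<in> space M. eps i \<omega> = -1} = 1/2"
begin

lemma measurable_eps[measurable]: "i \<ge> 1 \<Longrightarrow> eps i \<in> borel_measurable M"
  using indep unfolding indep_vars_def by auto

lemma AE_signs: "AE \<omega> in M. \<forall>i\<ge>1. eps i \<omega> \<in> {-1,1}"
proof -
  have "AE \<omega> in M. eps i \<omega> \<in> {-1,1}" if i: "i \<ge> 1" for i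
  proof -
    have ev: "{\<omega>\<in>space M. eps i \<omega> \<in> {-1,1}} \<in> events" using i by measurable
    have "{\<omega>\<in>space M. eps i \<omega> \<in> {-1,1}} = {\<omega>\<in>space M. eps i \<omega> = 1} \<union> {\<omega>\<in>space M. eps i \<omega> = -1}"
      by auto
    moreover have "prob ({\<omega>\<in>space M. eps i \<omega> = 1} \<union> {\<omega>\<in>space M. eps i \<omega> = -1}) =
        prob {\<omega>\<in>space M. eps i \<omega> = 1} + prob {\<omega>\<in>space M. eps i \<omega> = -1}"
      using i by (intro finite_measure_Union) auto
    ultimately have "prob {\<omega>\<in>space M. eps i \<omega> \<in> {-1,1}} = 1" using prob_plus[OF i] prob_minus[OF i] by simp
    then show ?thesis using AE_in_set_eq_1[OF ev] by simp
  qed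
  then show ?thesis by (subst AE_all_countable) (auto intro: AE_mp)
qed

text \<open>Each such event is a disjoint union of cylinders of
  probability \<open>2\<^sup>-\<^sup>|\<^sup>G\<^sup>|\<close>, so its probability is a normalized count of sign vectors.\<close>

definition sign_event :: "nat set \<Rightarrow> ((nat \<Rightarrow> real) \<Rightarrow> bool) \<Rightarrow> 'a set" where
  "sign_event G Q = {\<omega>\<in>space M. (\<forall>i\<in>G. eps i \<omega> \<in> {-1,1}) \<and> Q (restrict (\<lambda>i. eps i \<omega>) G)}"

definition cylinder :: "nat set \<Rightarrow> (nat \<Rightarrow> real) \<Rightarrow> 'a set" where
  "cylinder G s = {\<omega>\<in>space M. \<forall>i\<in>G. eps i \<omega> = s i}"

lemma sign_event_eq_UN:
  "sign_event G Q = (\<Union>s\<in>{s \<in> PiE G (\<lambda>_. {-1,1}). Q s}. cylinder G s)"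
proof (intro set_eqI iffI)
  fix \<omega> assume "\<omega> \<in> sign_event G Q"
  then show "\<omega> \<in> (\<Union>s\<in>{s \<in> PiE G (\<lambda>_. {-1,1}). Q s}. cylinder G s)"
    unfolding sign_event_def cylinder_def by (intro UN_I[of "restrict (\<lambda>i. eps i \<omega>) G"]) auto
next
  fix \<omega> assume "\<omega> \<in> (\<Union>s\<in>{s \<in> PiE G (\<lambda>_. {-1,1}). Q s}. cylinder G s)"
  then obtain s where s: "s \<in> PiE G (\<lambda>_. {-1,1})" "Q s" and \<omega>: "\<omega> \<in> cylinder G s" by blast
  then have "restrict (\<lambda>i. eps i \<omega>) G = s" unfolding cylinder_def by (auto simp: PiE_def extensional_def)
  then show "\<omega> \<in> sign_event G Q" using s \<omega> unfolding sign_event_def cylinder_def by auto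
qed

lemma cylinder_in_events:
  assumes "finite G" "G \<subseteq> {1..}" shows "cylinder G s \<in> events"
proof -
  have "Measurable.pred M (\<lambda>\<omega>. \<forall>i\<in>G. eps i \<omega> = s i)"
  proof (rule pred_intros_finite(3)[OF assms(1)])
    fix i assume "i \<in> G"
    then have [measurable]: "eps i \<in> borel_measurable M" using assms(2) by (intro measurable_eps) auto
    show "Measurable.pred M (\<lambda>\<omega>. eps i \<omega> = s i)" by measurable
  qed
  then show ?thesis unfolding cylinder_def by measurable
qed

lemma sign_event_in_events:
  assumes "finite G" "G \<subseteq> {1..}" shows "sign_event G Q \<in> events"
  unfolding sign_event_eq_UN using assms cylinder_in_events by (auto intro!: sets.finite_UN simp: finite_PiE)

lemma prob_cylinder:
  assumes G: "finite G" "G \<noteq> {}" "G \<subseteq> {1..}" and s: "s \<in> PiE G (\<lambda>_. {-1,1})"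
  shows "prob (cylinder G s) = (1/2)^card G"
proof -
  have "cylinder G s = (\<Inter>i\<in>G. eps i -` {s i} \<inter> space M)"
    using G(2) unfolding cylinder_def by auto
  then have "prob (cylinder G s) = (\<Prod>i\<in>G. prob (eps i -` {s i} \<inter> space M))"
    using indep_varsD[OF indep G(2,1,3)] by simp
  also have "\<dots> = (\<Prod>i\<in>G. 1/2)"
  proof (rule prod.cong[OF refl])
    fix i assume i: "i \<in> G"
    then have "i \<ge> 1" "s i = 1 \<or> s i = -1" using G(3) s by auto
    moreover have "eps i -` {s i} \<inter> space M = {\<omega>\<in>space M. eps i \<omega> = s i}" by auto
    ultimately show "prob (eps i -` {s i} \<inter> space M) = 1/2" using prob_plus prob_minus by auto
  qed
  finally show ?thesis by simp
qed

lemma prob_sign_event: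
  assumes G: "finite G" "G \<noteq> {}" "G \<subseteq> {1..}"
  shows "prob (sign_event G Q) = real (card {s \<in> PiE G (\<lambda>_. {-1,1::real}). Q s}) / 2^card G"
proof -
  define P where "P = {s \<in> PiE G (\<lambda>_. {-1,1::real}). Q s}"
  have "disjoint_family_on (cylinder G) P"
  proof (unfold disjoint_family_on_def, intro ballI impI)
    fix s s' assume "s \<in> P" "s' \<in> P" "s \<noteq> s'"
    then obtain i where "i \<in> G" "s i \<noteq> s' i"
      unfolding P_def by (auto simp: PiE_def extensional_def fun_eq_iff) metis
    then show "cylinder G s \<inter> cylinder G s' = {}" unfolding cylinder_def by auto
  qed
  then have "prob (\<Union>s\<in>P. cylinder G s) = (\<Sum>s\<in>P. prob (cylinder G s))"
    using G cylinder_in_events unfolding P_def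
    by (intro measure_finite_Union) (auto simp: finite_PiE emeasure_eq_measure)
  also have "\<dots> = real (card P) * (1/2)^card G" using prob_cylinder[OF G] unfolding P_def by simp
  finally show ?thesis unfolding sign_event_eq_UN P_def by (simp add: power_one_over divide_simps)
qed

lemma prob_sign_event_flip:
  assumes G: "finite G" "G \<noteq> {}" "G \<subseteq> {1..}"
  shows "prob (sign_event G (\<lambda>s. Q (\<lambda>i\<in>G. - s i))) = prob (sign_event G Q)"
proof -
  define flip where "flip s = (\<lambda>i\<in>G. - s i)" for s :: "nat \<Rightarrow> real"
  define Pat where "Pat = PiE G (\<lambda>_. {-1,1::real})"
  have flip_Pat: "flip s \<in> Pat" if "s \<in> Pat" for s
    using that unfolding flip_def Pat_def by (auto simp: PiE_def)
  have flip_flip: "flip (flip s) = s" if "s \<in> Pat" for s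
    using that unfolding flip_def Pat_def by (auto simp: PiE_def extensional_def fun_eq_iff)
  have "bij_betw flip {s \<in> Pat. Q (flip s)} {s \<in> Pat. Q s}"
    by (rule bij_betw_byWitness[where f' = flip]) (use flip_Pat flip_flip in \<open>auto simp: image_def\<close>)
  then have "card {s \<in> Pat. Q (flip s)} = card {s \<in> Pat. Q s}" by (rule bij_betw_same_card)
  then show ?thesis unfolding prob_sign_event[OF G] Pat_def flip_def by simp
qed

definition large_block :: "nat \<Rightarrow> 'a set" where
  "large_block k = sign_event (block k) (\<lambda>s. 2 * real (level k) \<le> (\<Sum>i\<in>block k. s i))"

lemma large_block_in_events: "large_block k \<in> events"
  unfolding large_block_def using block_subset by (intro sign_event_in_events) (auto simp: block_def)

lemma prob_large_block:
  assumes k1: "k \<ge> 1" and m1: "half_len k \<ge> 1" and lv: "real (half_len k) \<le> real (level k)^2"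
    and lv8: "8 * level k \<le> half_len k"
    and kexp: "1 / real k \<le> exp (-16 * real (level k)^2 / real (half_len k)) / 2"
  shows "prob (large_block k) \<ge> 1 / real k"
proof -
  define m where "m = half_len k"
  define r where "r = level k"
  have card: "card (block k) = 2*m" unfolding m_def by (rule card_block[OF k1])
  have G: "finite (block k)" "block k \<noteq> {}" "block k \<subseteq> {1..}"
    using card m1 block_subset unfolding m_def block_def by auto
  have "4^m * exp (-16 * real r^2 / real m) / 2 \<le> real (\<Sum>j\<in>{r..2*r}. (2*m) choose (m+j))"
    using m1 lv lv8 unfolding m_def r_def by (intro binomial_tail_lower) auto
  also have "\<dots> \<le> real (card {s \<in> PiE (block k) (\<lambda>_. {-1,1::real}). (\<Sum>i\<in>block k. s i) \<ge> 2 * real r})"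
    using card_sign_vectors_large_sum[OF G(1) card] by (simp only: of_nat_le_iff)
  moreover have "(2::real)^card (block k) = 4^m" unfolding card by (simp add: power_mult)
  ultimately have "exp (-16 * real r^2 / real m) / 2 \<le> prob (large_block k)"
    unfolding large_block_def prob_sign_event[OF G] r_def by (simp add: field_simps)
  then show ?thesis using kexp unfolding m_def r_def by linarith
qed

text \<open>The blocks are disjoint, so the events "block \<open>k\<close> is not large" are independent.\<close>

lemma indep_small_blocks:
  assumes L: "finite L" "L \<noteq> {}" "L \<subseteq> {1..}"
  shows "prob (\<Inter>k\<in>L. space M - large_block k) = (\<Prod>k\<in>L. prob (space M - large_block k))"
proof -
  have iv: "indep_vars (\<lambda>k. PiM (block k) (\<lambda>_. borel)) (\<lambda>k \<omega>. restrict (\<lambda>i. eps i \<omega>) (block k)) {1..}"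
    by (rule indep_vars_restrict[OF indep]) (use block_subset disjoint_blocks in auto)
  define P where "P k x \<longleftrightarrow> \<not> ((\<forall>i\<in>block k. x i \<in> {-1,1::real}) \<and> 2 * real (level k) \<le> (\<Sum>i\<in>block k. x i))"
    for k x
  have "{x \<in> space (PiM (block k) (\<lambda>_. borel)). P k x} \<in> sets (PiM (block k) (\<lambda>_. borel))" for k
  proof -
    have [measurable]: "(\<lambda>x. \<Sum>i\<in>block k. x i) \<in> borel_measurable (PiM (block k) (\<lambda>_. borel :: real measure))"
      by (intro borel_measurable_sum) (auto intro: measurable_component_singleton)
    have [measurable]: "Measurable.pred (PiM (block k) (\<lambda>_. borel :: real measure)) (\<lambda>x. x i \<in> {-1,1::real})"
      if "i \<in> block k" for i
      using that by measurable
    show ?thesis unfolding P_def by (measurable; simp add: block_def)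
  qed
  then have "indep_events (\<lambda>k. {\<omega>\<in>space M. P k (restrict (\<lambda>i. eps i \<omega>) (block k))}) {1..}"
    by (intro indep_eventsI_indep_vars[OF iv]) auto
  moreover have "{\<omega>\<in>space M. P k (restrict (\<lambda>i. eps i \<omega>) (block k))} = space M - large_block k" for k
    unfolding P_def large_block_def sign_event_def by auto
  ultimately show ?thesis using L unfolding indep_events_def by auto
qed

lemma prob_some_large_block:
  assumes K1: "K \<ge> 1" and pB: "\<And>k. k \<in> {K..2*K} \<Longrightarrow> prob (large_block k) \<ge> 1 / real k"
  shows "prob (\<Union>k\<in>{K..2*K}. large_block k) \<ge> 1/2"
proof -
  define L where "L = {K..2*K}"
  have L: "finite L" "L \<noteq> {}" "L \<subseteq> {1..}" unfolding L_def using K1 by auto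
  have "prob (\<Inter>k\<in>L. space M - large_block k) = (\<Prod>k\<in>L. prob (space M - large_block k))"
    by (rule indep_small_blocks[OF L])
  also have "\<dots> \<le> (\<Prod>k\<in>L. 1 - 1 / real k)"
    using pB prob_compl[OF large_block_in_events] unfolding L_def by (intro prod_mono) auto
  also have "\<dots> = (real K - 1) / real (K + K)"
    unfolding L_def mult_2 by (rule prod_one_minus_inverse[OF K1])
  also have "\<dots> \<le> 1/2" using K1 by (simp add: divide_simps)
  finally have small: "prob (\<Inter>k\<in>L. space M - large_block k) \<le> 1/2" .
  have union: "(\<Union>k\<in>L. large_block k) = space M - (\<Inter>k\<in>L. space M - large_block k)"
    using L(2) large_block_in_events sets.sets_into_space by blast
  have "(\<Inter>k\<in>L. space M - large_block k) \<in> events"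
    using L large_block_in_events by (intro sets.finite_INT) auto
  then have "prob (\<Union>k\<in>L. large_block k) = 1 - prob (\<Inter>k\<in>L. space M - large_block k)"
    unfolding union by (rule prob_compl)
  then show ?thesis using small unfolding L_def by simp
qed

lemma large_block_dichotomy:
  assumes "k \<ge> 1" "\<omega> \<in> large_block k"
  shows "real (level k) \<le> partial_sum (\<lambda>i. eps i \<omega>) (block_end k)
         \<or> partial_sum (\<lambda>i. eps i \<omega>) (block_end (k-1)) \<le> - real (level k)"
proof -
  have "2 * real (level k) \<le> (\<Sum>i\<in>block k. eps i \<omega>)"
    using assms(2) unfolding large_block_def sign_event_def by simp
  then show ?thesis using partial_sum_block[OF assms(1), of "\<lambda>i. eps i \<omega>"] by linarith
qed

definition high :: "nat \<Rightarrow> 'a set" where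
  "high j = {\<omega>\<in>space M. real (level j) \<le> partial_sum (\<lambda>i. eps i \<omega>) (block_end j)}"

lemma high_in_events: "high j \<in> events"
proof -
  have "(\<lambda>\<omega>. partial_sum (\<lambda>i. eps i \<omega>) n) \<in> borel_measurable M" for n
    unfolding partial_sum_def by (intro borel_measurable_sum measurable_eps) auto
  then show ?thesis unfolding high_def by measurable
qed

lemma large_blocks_high_or_low:
  assumes K1: "K \<ge> 1"
  shows "AE \<omega> in M. \<omega> \<in> (\<Union>k\<in>{K..2*K}. large_block k) \<longrightarrow>
           \<omega> \<in> sign_event (window K) (high_at {K..2*K}) \<union> sign_event (window K) (low_before {K..2*K})"
  using AE_signs
proof eventually_elim
  case (elim \<omega>)
  show ?case
  proof
    assume "\<omega> \<in> (\<Union>k\<in>{K..2*K}. large_block k)"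
    then obtain k where k: "k \<in> {K..2*K}" "\<omega> \<in> large_block k" by blast
    then have \<omega>: "\<omega> \<in> space M" and "k \<ge> 1"
      using K1 unfolding large_block_def sign_event_def by auto
    have signs: "\<forall>i\<in>window K. eps i \<omega> \<in> {-1,1}" using elim window_def by auto
    have "partial_sum (restrict (\<lambda>i. eps i \<omega>) (window K)) (block_end k) = partial_sum (\<lambda>i. eps i \<omega>) (block_end k)"
      "partial_sum (restrict (\<lambda>i. eps i \<omega>) (window K)) (block_end (k-1)) = partial_sum (\<lambda>i. eps i \<omega>) (block_end (k-1))"
      using k(1) by (auto intro!: partial_sum_window)
    with large_block_dichotomy[OF \<open>k \<ge> 1\<close> k(2)] show "\<omega> \<in> sign_event (window K) (high_at {K..2*K})
        \<union> sign_event (window K) (low_before {K..2*K})"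
      using k(1) signs \<omega> unfolding high_at_def low_before_def sign_event_def by (auto intro!: bexI[of _ k])
  qed
qed

lemma high_at_subset_high:
  "sign_event (window K) (high_at {K..2*K}) \<subseteq> (\<Union>j\<in>{K-1..}. high j)"
  unfolding sign_event_def high_at_def high_def by (fastforce simp: partial_sum_window)

text \<open>After flipping the signs, "low at the left end of block \<open>k\<close>" becomes "high at checkpoint
  \<open>k - 1\<close>", since \<open>level\<close> is monotone.\<close>

lemma flipped_low_subset_high:
  "sign_event (window K) (\<lambda>s. low_before {K..2*K} (\<lambda>i\<in>window K. - s i)) \<subseteq> (\<Union>j\<in>{K-1..}. high j)"
proof
  fix \<omega> assume "\<omega> \<in> sign_event (window K) (\<lambda>s. low_before {K..2*K} (\<lambda>i\<in>window K. - s i))"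
  then obtain k where k: "k \<in> {K..2*K}" "\<omega> \<in> space M"
    and low: "partial_sum (\<lambda>i\<in>window K. - restrict (\<lambda>i. eps i \<omega>) (window K) i) (block_end (k-1))
              \<le> - real (level k)"
    unfolding sign_event_def low_before_def by auto
  have "k - 1 \<le> 2*K" using k(1) by auto
  have "partial_sum (\<lambda>i\<in>window K. - restrict (\<lambda>i. eps i \<omega>) (window K) i) (block_end (k-1))
        = - partial_sum (\<lambda>i. eps i \<omega>) (block_end (k-1))"
    using partial_sum_window[OF \<open>k - 1 \<le> 2*K\<close>, of "\<lambda>i. - eps i \<omega>"]
    by (simp add: partial_sum_def sum_negf restrict_def cong: if_cong)
  moreover have "level (k-1) \<le> level k" by (intro level_mono) auto
  ultimately have "\<omega> \<in> high (k-1)" using low k(2) unfolding high_def by simp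
  then show "\<omega> \<in> (\<Union>j\<in>{K-1..}. high j)" using k(1) by auto
qed

text \<open>If each block in \<open>{K..2K}\<close> is large with probability \<open>\<ge> 1/k\<close>, then some checkpoint
  \<open>j \<ge> K - 1\<close> is high with probability \<open>\<ge> 1/4\<close>: some block is large with probability \<open>\<ge> 1/2\<close>,
  and by the sign-flip symmetry "low" is no more likely than "high".\<close>

lemma prob_high_after:
  assumes K1: "K \<ge> 1" and pB: "\<And>k. k \<in> {K..2*K} \<Longrightarrow> prob (large_block k) \<ge> 1 / real k"
  shows "prob (\<Union>j\<in>{K-1..}. high j) \<ge> 1/4"
proof -
  define H where "H = (\<Union>j\<in>{K-1..}. high j)"
  define W where "W = sign_event (window K) (high_at {K..2*K})"
  define N where "N = sign_event (window K) (low_before {K..2*K})"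
  define P where "P = sign_event (window K) (\<lambda>s. low_before {K..2*K} (\<lambda>i\<in>window K. - s i))"
  have ev: "W \<in> events" "N \<in> events" "P \<in> events" "H \<in> events"
    unfolding W_def N_def P_def H_def using window sign_event_in_events high_in_events by auto
  have "1/2 \<le> prob (\<Union>k\<in>{K..2*K}. large_block k)" by (rule prob_some_large_block[OF K1 pB])
  also have "\<dots> \<le> prob (W \<union> N)"
    using large_blocks_high_or_low[OF K1] ev unfolding W_def N_def by (intro finite_measure_mono_AE) auto
  also have "\<dots> \<le> prob W + prob N" using ev by (intro measure_Un_le) auto
  also have "prob N = prob P" unfolding N_def P_def by (rule prob_sign_event_flip[OF window, symmetric])
  also have "prob W \<le> prob H"
    using high_at_subset_high ev unfolding W_def H_def by (intro finite_measure_mono) auto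
  also have "prob P \<le> prob H"
    using flipped_low_subset_high ev unfolding P_def H_def by (intro finite_measure_mono) auto
  finally show ?thesis unfolding H_def by linarith
qed

lemma prob_high_infinitely_often: "prob (\<Inter>K. \<Union>j\<in>{K..}. high j) \<ge> 1/4"
proof -
  obtain K0 where K0: "\<And>k. k \<ge> K0 \<Longrightarrow> prob (large_block k) \<ge> 1 / real k"
    using eventually_block_conditions prob_large_block unfolding eventually_sequentially by meson
  define A where "A K = (\<Union>j\<in>{K..}. high j)" for K
  have "decseq A" unfolding A_def decseq_def by (intro allI impI UN_mono) auto
  then have "(\<lambda>K. prob (A K)) \<longlonglongrightarrow> prob (\<Inter>K. A K)"
    unfolding A_def using high_in_events by (intro finite_Lim_measure_decseq) auto
  moreover have "1/4 \<le> prob (A K)" if "K \<ge> K0" for K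
    using prob_high_after[of "Suc K"] K0 that unfolding A_def by simp
  ultimately have "1/4 \<le> prob (\<Inter>K. A K)"
    by (intro LIMSEQ_le_const) (auto simp: eventually_sequentially)
  then show ?thesis unfolding A_def .
qed

end

lemma esym_lower:
  "\<exists>A\<ge>1. \<forall>x n. n \<ge> 1 \<longrightarrow> (\<forall>i\<in>{1..n}. x i = 1 \<or> x i = -1) \<longrightarrow>
     1 \<le> partial_sum x n \<longrightarrow> A * real n \<le> (partial_sum x n)^2 \<longrightarrow>
     (partial_sum x n)^d / (2 * fact d) \<le> esym x d n"
proof -
  obtain A where A: "A \<ge> 1" "\<And>n S. 1 \<le> n \<Longrightarrow> A * n \<le> S^2 \<Longrightarrow> 1 \<le> S \<Longrightarrow> fact d * sign_poly d n S \<ge> S^d / 2"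
    using sign_poly_lower[of d] by blast
  have "(partial_sum x n)^d / (2 * fact d) \<le> esym x d n"
    if "n \<ge> 1" "\<forall>i\<in>{1..n}. x i = 1 \<or> x i = -1" "1 \<le> partial_sum x n" "A * real n \<le> (partial_sum x n)^2"
    for x n
  proof -
    have "(partial_sum x n)^d / 2 \<le> fact d * esym x d n"
      using that A(2) esym_eq_sign_poly[of n x d] unfolding partial_sum_def by simp
    then show ?thesis by (simp add: field_simps)
  qed
  then show ?thesis using A(1) by blast
qed

lemma normalized_lower:
  fixes X B S C E :: real
  assumes "X > 0" "B > 0" "C > 0" "S \<ge> 0" "X \<le> B * S^2" "S^d / C \<le> E"
  shows "(1 / sqrt B)^d / C \<le> E / X powr (real d / 2)"
proof -
  have Xd: "X powr (real d / 2) = sqrt X ^ d"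
    using \<open>X > 0\<close> by (simp add: powr_half_sqrt[symmetric] powr_powr powr_realpow[symmetric])
  have "sqrt X \<le> sqrt (B * S^2)" using assms by (intro real_sqrt_le_mono)
  also have "\<dots> = sqrt B * S" using assms by (simp add: real_sqrt_mult)
  finally have "sqrt X ^ d \<le> (sqrt B * S)^d" using \<open>X > 0\<close> by (intro power_mono) auto
  then have "(1 / sqrt B)^d / C * sqrt X ^ d \<le> (1 / sqrt B)^d / C * (sqrt B * S)^d"
    using assms by (intro mult_left_mono) auto
  also have "\<dots> = S^d / C" using \<open>B > 0\<close> by (simp add: power_mult_distrib field_simps)
  finally have "(1 / sqrt B)^d / C * X powr (real d / 2) \<le> E" using assms Xd by simp
  moreover have "X powr (real d / 2) > 0" using \<open>X > 0\<close> by simp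
  ultimately show ?thesis by (simp add: field_simps)
qed

lemma limsup_ge:
  fixes f :: "nat \<Rightarrow> ereal"
  assumes "\<And>N. \<exists>n\<ge>N. a \<le> f n"
  shows "a \<le> limsup f"
  unfolding limsup_INF_SUP
proof (rule INF_greatest)
  fix N :: nat
  obtain n where "n \<ge> N" "a \<le> f n" using assms by blast
  then show "a \<le> (SUP m\<in>{N..}. f m)" by (intro SUP_upper2[of n]) auto
qed

context rademacher
begin

lemma high_normalized_lower:
  "\<exists>J \<delta>. \<delta> > 0 \<and> (\<forall>j \<omega>. j \<ge> J \<longrightarrow> \<omega> \<in> high j \<longrightarrow> (\<forall>i\<ge>1. eps i \<omega> \<in> {-1,1}) \<longrightarrow>
      \<delta> \<le> xi eps d (block_end j) \<omega> /
           (real (block_end j) * ln (ln (real (block_end j) + 3))) powr (real d / 2))"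
proof -
  obtain A :: real where A: "A \<ge> 1"
    and esym: "\<And>x n. n \<ge> 1 \<Longrightarrow> \<forall>i\<in>{1..n}. x i = 1 \<or> x i = -1 \<Longrightarrow>
           1 \<le> partial_sum x n \<Longrightarrow> A * real n \<le> (partial_sum x n)^2 \<Longrightarrow>
           (partial_sum x n)^d / (2 * fact d) \<le> esym x d n"
    using esym_lower[of d] by blast
  obtain J where J: "\<And>j. j \<ge> J \<Longrightarrow> 1 \<le> level j \<and> A * real (block_end j) \<le> real (level j)^2 \<and>
     real (block_end j) * ln (ln (real (block_end j) + 3)) \<le> 1536 * real (level j)^2"
    using eventually_level_large[of A] unfolding eventually_sequentially by blast
  have "(1 / sqrt 1536)^d / (2 * fact d) \<le>
        xi eps d (block_end j) \<omega> / (real (block_end j) * ln (ln (real (block_end j) + 3))) powr (real d / 2)"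
    if j: "j \<ge> J" and \<omega>: "\<omega> \<in> high j" and signs: "\<forall>i\<ge>1. eps i \<omega> \<in> {-1,1}" for j \<omega>
  proof -
    define n where "n = block_end j"
    define S where "S = partial_sum (\<lambda>i. eps i \<omega>) n"
    have n1: "n \<ge> 1" unfolding n_def block_end_def by simp
    have lS: "real (level j) \<le> S" using \<omega> unfolding high_def S_def n_def by simp
    then have sq: "real (level j)^2 \<le> S^2" by (intro power_mono) auto
    have S: "1 \<le> S" "A * real n \<le> S^2" "real n * ln (ln (real n + 3)) \<le> 1536 * S^2"
      using J[OF j] lS sq unfolding n_def by linarith+
    have "ln (real n + 3) > 1"
      using n1 exp_le ln_less_cancel_iff[of "exp 1" "real n + 3"] by simp
    then have "real n * ln (ln (real n + 3)) > 0" using n1 by simp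
    moreover have "S^d / (2 * fact d) \<le> xi eps d n \<omega>"
    proof -
      have "\<forall>i\<in>{1..n}. eps i \<omega> = 1 \<or> eps i \<omega> = -1" using signs by auto
      then have "S^d / (2 * fact d) \<le> esym (\<lambda>i. eps i \<omega>) d n"
        unfolding S_def by (rule esym[OF n1 _ S(1,2)[unfolded S_def]])
      then show ?thesis by (simp add: xi_eq_esym)
    qed
    ultimately show ?thesis unfolding n_def[symmetric] using S by (intro normalized_lower) auto
  qed
  moreover have "(1 / sqrt 1536)^d / (2 * fact d) > (0::real)" by simp
  ultimately show ?thesis by blast
qed

theorem limsup_normalized_xi_positive:
  "prob {\<omega> \<in> space M. limsup (\<lambda>n. ereal (xi eps d n \<omega> /
       (real n * ln (ln (real n + 3))) powr (real d / 2))) > 0} > 0"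
  (is "prob ?T > 0")
proof -
  obtain J \<delta> where "\<delta> > 0" and \<delta>: "\<And>j \<omega>. j \<ge> J \<Longrightarrow> \<omega> \<in> high j \<Longrightarrow> \<forall>i\<ge>1. eps i \<omega> \<in> {-1,1} \<Longrightarrow>
      \<delta> \<le> xi eps d (block_end j) \<omega> / (real (block_end j) * ln (ln (real (block_end j) + 3))) powr (real d / 2)"
    using high_normalized_lower[of d] by blast
  have "(\<lambda>\<omega>. xi eps d n \<omega>) \<in> borel_measurable M" for n
    unfolding xi_def by (intro borel_measurable_sum borel_measurable_prod measurable_eps) auto
  then have "?T \<in> events" by measurable
  moreover have "AE \<omega> in M. \<omega> \<in> (\<Inter>K. \<Union>j\<in>{K..}. high j) \<longrightarrow> \<omega> \<in> ?T"
    using AE_signs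
  proof eventually_elim
    case (elim \<omega>)
    show ?case
    proof
      assume io: "\<omega> \<in> (\<Inter>K. \<Union>j\<in>{K..}. high j)"
      have "\<exists>n\<ge>N. ereal \<delta> \<le> ereal (xi eps d n \<omega> / (real n * ln (ln (real n + 3))) powr (real d / 2))" for N
      proof -
        obtain j where "j \<ge> max J N" "\<omega> \<in> high j" using io by blast
        then show ?thesis using \<delta>[of j \<omega>] elim block_end_ge[of j] by (intro exI[of _ "block_end j"]) auto
      qed
      then have "ereal \<delta> \<le> limsup (\<lambda>n. ereal (xi eps d n \<omega> / (real n * ln (ln (real n + 3))) powr (real d / 2)))"
        by (rule limsup_ge)
      then show "\<omega> \<in> ?T" using io \<open>\<delta> > 0\<close> high_def by (auto intro: less_le_trans[of 0 "ereal \<delta>"])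
    qed
  qed
  ultimately have "prob (\<Inter>K. \<Union>j\<in>{K..}. high j) \<le> prob ?T" by (intro finite_measure_mono_AE)
  then show ?thesis using prob_high_infinitely_often by linarith
qed

end

theorem mainTheorem9:
  fixes M :: "'a measure" and eps :: "nat \<Rightarrow> 'a \<Rightarrow> real" and d :: nat
  assumes "prob_space M"
    and "prob_space.indep_vars M (\<lambda>_. borel) eps {1..}"
    and "\<And>i. i \<ge> 1 \<Longrightarrow> measure M {\<omega> \<in> space M. eps i \<omega> = 1} = 1/2"
    and "\<And>i. i \<ge> 1 \<Longrightarrow> measure M {\<omega> \<in> space M. eps i \<omega> = -1} = 1/2"
    and "d \<ge> 1"
  shows "measure M {\<omega> \<in> space M.
           limsup (\<lambda>n. ereal (xi eps d n \<omega> /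
              (real n * ln (ln (real n + 3))) powr (real d / 2))) > 0} > 0"
proof -
  interpret rademacher M eps
    using assms(1-4) by (simp add: rademacher_def rademacher_axioms_def)
  show ?thesis by (rule limsup_normalized_xi_positive)
qed

end
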